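(* Let $n\ge2$, $A\in\mathbb{R}^{n\times d}$, $\mathcal{B}_d=\{\mathbf{w}\in\mathbb{R}^d:\|\mathbf{w}\|_2\le1\}$, and let $\alpha_t=1$. (MPFP.) Let $c=\sqrt{\log n}+\frac{1}{\sqrt2}$, $\alpha_{\mathbf{w}}=\frac{\sqrt{\log n}}{c}$, $\alpha_{\mathbf{p}}=\frac{1}{\sqrt{\log n}\,c}$, $\gamma_t=\frac1c$, and $R(\mathbf{w},\mathbf{p})=\alpha_{\mathbf{w}}\frac12\|\mathbf{w}\|_2^2+\alpha_{\mathbf{p}}E(\mathbf{p})$ on $\mathcal{Z}=\mathcal{B}_d\times\Delta^n$. Let $F(\mathbf{w},\mathbf{p})=[-A^{\top}\mathbf{p};A\mathbf{w}]\in\mathbb{R}^{d+n}$ and $\mathrm{Prox}^R_{\mathbf{v}}(\mathbf{z})=\arg\min_{\mathbf{u}\in\mathcal{Z}}\{\mathbf{u}^{\top}\mathbf{z}+D_R(\mathbf{u},\mathbf{v})\}$. Set $\mathbf{v}_1=[\mathbf{0};\tfrac{\mathbf{1}}{n}]$ and for $t=1,\dots,T$: $\mathbf{u}_t=\mathrm{Prox}^R_{\mathbf{v}_t}(\gamma_tF(\mathbf{v}_t))$, $\mathbf{v}_{t+1}=\mathrm{Prox}^R_{\mathbf{v}_t}(\gamma_tF(\mathbf{u}_t))$, $\mathbf{z}_t=\frac{\sum_{s=1}^t\gamma_s\mathbf{u}_s}{\sum_{s=1}^t\gamma_s}$. (Optimistic mirror descent dynamics.) $\widehat{\mathbf{w}}_0=\mathbf{0}$,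 $\widehat{\mathbf{p}}_0=\tfrac{\mathbf{1}}{n}$; for $t=1,\dots,T$: $\mathbf{w}_t=\arg\min_{\mathbf{w}\in\mathcal{B}_d}\frac{1}{\sqrt{\log n}}\langle-A^{\top}\widehat{\mathbf{p}}_{t-1},\mathbf{w}\rangle+\frac12\|\mathbf{w}-\widehat{\mathbf{w}}_{t-1}\|_2^2$, $\mathbf{p}_t=\arg\min_{\mathbf{p}\in\Delta^n}\sqrt{\log n}\langle A\widehat{\mathbf{w}}_{t-1},\mathbf{p}\rangle+D_E(\mathbf{p},\widehat{\mathbf{p}}_{t-1})$, $\widehat{\mathbf{w}}_t=\arg\min_{\mathbf{w}\in\mathcal{B}_d}\frac{1}{\sqrt{\log n}}\langle-A^{\top}\mathbf{p}_t,\mathbf{w}\rangle+\frac12\|\mathbf{w}-\widehat{\mathbf{w}}_{t-1}\|_2^2$, $\widehat{\mathbf{p}}_t=\arg\min_{\mathbf{p}\in\Delta^n}\sqrt{\log n}\langle A\mathbf{w}_t,\mathbf{p}\rangle+D_E(\mathbf{p},\widehat{\mathbf{p}}_{t-1})$. Then for every $t\in[T]$: $\mathbf{u}_t=[\mathbf{w}_t;\mathbf{p}_t]$, $\mathbf{v}_{t+1}=[\widehat{\mathbf{w}}_t;\widehat{\mathbf{p}}_t]$, and $\mathbf{z}_t=\big[\frac1t\sum_{s=1}^t\mathbf{w}_s;\frac1t\sum_{s=1}^t\mathbf{p}_s\big]$.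
   Context: $\Delta^n$ is the probability simplex; $\mathbf{1}$ the all-ones vector; $[\mathbf{x};\mathbf{y}]$ denotes concatenation. $E(\mathbf{p})=\sum_ip_i\log p_i$ is the negative entropy, $D_E(\mathbf{p},\mathbf{q})=\sum_ip_i\log(p_i/q_i)$ its Bregman divergence, and $D_R(\mathbf{u},\mathbf{v})=R(\mathbf{u})-R(\mathbf{v})-(\mathbf{u}-\mathbf{v})^{\top}\nabla R(\mathbf{v})$. MPFP is the mirror-prox feasibility algorithm of Yu, Kılınç-Karzan and Carbonell specialized to the bilinear objective $\mathbf{p}^{\top}A\mathbf{w}$. *)

theory Defs
  imports "HOL-Analysis.Analysis"
begin

definition prob_simplex :: "(real^'n::finite) set" where
  "prob_simplex = {p. (\<forall>i. 0 \<le> p $ i) \<and> (\<Sum>i\<in>UNIV. p $ i) = 1}"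

text \<open>Negative entropy E(p) = sum_i p_i log p_i (with Isabelle's ln 0 = 0, so 0 log 0 = 0).\<close>
definition negent :: "real^'n::finite \<Rightarrow> real" where
  "negent p = (\<Sum>i\<in>UNIV. p $ i * ln (p $ i))"

definition bregE :: "real^'n::finite \<Rightarrow> real^'n \<Rightarrow> real" where
  "bregE p q = (\<Sum>i\<in>UNIV. p $ i * ln (p $ i / q $ i))"

definition Rreg :: "real \<Rightarrow> real \<Rightarrow> (real^'d::finite) \<times> (real^'n::finite) \<Rightarrow> real" where
  "Rreg aw ap z = aw * (1/2) * (norm (fst z))^2 + ap * negent (snd z)"

definition gradR :: "real \<Rightarrow> real \<Rightarrow> (real^'d::finite) \<times> (real^'n::finite) \<Rightarrow> (real^'d) \<times> (real^'n)" where
  "gradR aw ap z = (aw *\<^sub>R fst z, ap *\<^sub>R (\<chi> i. ln (snd z $ i) + 1))"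

definition DR :: "real \<Rightarrow> real \<Rightarrow> (real^'d::finite) \<times> (real^'n::finite) \<Rightarrow> (real^'d) \<times> (real^'n) \<Rightarrow> real" where
  "DR aw ap u v = Rreg aw ap u - Rreg aw ap v - inner (u - v) (gradR aw ap v)"

definition Zset :: "((real^'d::finite) \<times> (real^'n::finite)) set" where
  "Zset = cball 0 1 \<times> prob_simplex"

definition Fop :: "real^'d::finite^'n::finite \<Rightarrow> (real^'d) \<times> (real^'n) \<Rightarrow> (real^'d) \<times> (real^'n)" where
  "Fop A z = (- (transpose A *v snd z), A *v fst z)"

definition is_prox :: "real \<Rightarrow> real \<Rightarrow> (real^'d::finite) \<times> (real^'n::finite) \<Rightarrow> (real^'d) \<times> (real^'n)
    \<Rightarrow> (real^'d) \<times> (real^'n) \<Rightarrow> bool" where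
  "is_prox aw ap v z x = is_arg_min (\<lambda>u. inner u z + DR aw ap u v) (\<lambda>u. u \<in> Zset) x"

end

theory Submission
  imports Defs
begin

text \<open>Because the base point \<open>v\<close> of every prox step has a strictly positive \<open>p\<close>-part,
  \<open>D\<^sub>R((x, q), v) = \<alpha>\<^sub>w \<parallel>x - v\<^sub>w\<parallel>\<^sup>2/2 + \<alpha>\<^sub>p D\<^sub>E(q, v\<^sub>p)\<close> on the ball times the simplex, so the
  prox objective is separable and the prox point is the pair of the minimisers of its two parts.
  Since \<open>\<gamma> = \<alpha>\<^sub>w / \<surd>(log n) = \<alpha>\<^sub>p \<surd>(log n)\<close>, these parts are positive multiples of the
  objectives of the optimistic mirror descent updates. Both problems have unique minimisers: the
  Euclidean one by strong convexity, the entropic one because it is the Gibbs reweighting of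
  \<open>v\<^sub>p\<close> by \<open>exp(-\<eta> y)\<close>, which is again strictly positive and so keeps the induction going.
  All \<open>\<gamma>\<^sub>t\<close> being equal, the weighted average \<open>z\<^sub>t\<close> is the plain average.\<close>

lemma is_arg_min_pos_affine:
  fixes f h :: "'a \<Rightarrow> real"
  assumes "is_arg_min f P a" and "\<And>x. P x \<Longrightarrow> f x = k * h x + C" and "0 < k"
  shows "is_arg_min h P a"
  using assms by (auto simp: is_arg_min_linorder)

lemma is_arg_min_separable:
  fixes F :: "'a \<times> 'b \<Rightarrow> real"
  assumes "is_arg_min F (\<lambda>u. u \<in> S \<times> U) (a, b)"
    and "\<And>x q. x \<in> S \<Longrightarrow> q \<in> U \<Longrightarrow> F (x, q) = f x + g q"
  shows "is_arg_min f (\<lambda>x. x \<in> S) a" and "is_arg_min g (\<lambda>q. q \<in> U) b"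
  using assms by (fastforce simp: is_arg_min_linorder)+

lemma is_arg_min_prox_quadratic_unique:
  fixes g v :: "'a::real_inner"
  defines "h \<equiv> \<lambda>x. inner g x + 1/2 * (norm (x - v))\<^sup>2"
  assumes "convex S" and "is_arg_min h (\<lambda>x. x \<in> S) a" and "is_arg_min h (\<lambda>x. x \<in> S) b"
  shows "a = b"
proof -
  define m where "m = (1/2) *\<^sub>R a + (1/2) *\<^sub>R b"
  have "m \<in> S"
    using assms(2-4) convexD[of S a b "1/2" "1/2"] by (simp add: is_arg_min_def m_def)
  then have "h a \<le> h m" and "h b \<le> h m"
    using assms(3,4) by (auto simp: is_arg_min_linorder)
  moreover \<comment> \<open>the parallelogram law in the form of strong convexity of \<open>h\<close>\<close>
  have "h m = (h a + h b) / 2 - (norm (a - b))\<^sup>2 / 8"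
    unfolding h_def m_def power2_norm_eq_inner
    by (simp add: inner_add_left inner_add_right inner_diff_left inner_diff_right
        inner_commute field_simps)
  ultimately have "(norm (a - b))\<^sup>2 \<le> 0"
    by argo
  then show "a = b"
    by simp
qed

lemma mult_ln_div_ge_diff:
  fixes q r :: real
  assumes "0 < r" and "0 \<le> q"
  shows "q - r \<le> q * ln (q / r)"
proof (cases "q = 0")
  case False
  with assms have "0 < q"
    by simp
  with assms have "1 - r / q \<le> ln (q / r)"
    using ln_le_minus_one[of "r / q"] by (simp add: ln_div)
  with \<open>0 < q\<close> show ?thesis
    using mult_left_mono[of "1 - r / q" "ln (q / r)" q] by (simp add: field_simps)
qed (use assms in simp)

lemma mult_ln_div_eq_diff_iff:
  fixes q r :: real
  assumes "0 < r" and "0 \<le> q"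
  shows "q * ln (q / r) = q - r \<longleftrightarrow> q = r"
proof
  assume eq: "q * ln (q / r) = q - r"
  with assms have "0 < q"
    by (cases "q = 0") auto
  with assms eq have "ln (r / q) = r / q - 1"
    by (simp add: ln_div field_simps)
  with assms \<open>0 < q\<close> show "q = r"
    using ln_eq_minus_one[of "r / q"] by simp
qed (use assms in simp)

definition simplex_interior :: "(real^'n::finite) set" where
  "simplex_interior = {q \<in> prob_simplex. \<forall>i. 0 < q $ i}"

lemma bregE_eq_sum_excess:
  assumes "q \<in> prob_simplex" and "r \<in> prob_simplex"
  shows "bregE q r = (\<Sum>i\<in>UNIV. q $ i * ln (q $ i / r $ i) - (q $ i - r $ i))"
  using assms by (simp add: bregE_def prob_simplex_def sum_subtractf)

lemma bregE_nonneg: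
  assumes "q \<in> prob_simplex" and "r \<in> simplex_interior"
  shows "0 \<le> bregE q r"
  using assms mult_ln_div_ge_diff
  by (auto simp: bregE_eq_sum_excess simplex_interior_def prob_simplex_def intro!: sum_nonneg)

lemma bregE_eq_0_iff:
  assumes "q \<in> prob_simplex" and "r \<in> simplex_interior"
  shows "bregE q r = 0 \<longleftrightarrow> q = r"
proof
  have q_nonneg: "0 \<le> q $ i" and r_pos: "0 < r $ i" for i
    using assms by (auto simp: simplex_interior_def prob_simplex_def)
  assume "bregE q r = 0"
  then have "(\<Sum>i\<in>UNIV. q $ i * ln (q $ i / r $ i) - (q $ i - r $ i)) = 0"
    using assms by (simp add: bregE_eq_sum_excess simplex_interior_def)
  then have "q $ i * ln (q $ i / r $ i) = q $ i - r $ i" for i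
    using mult_ln_div_ge_diff[OF r_pos q_nonneg] by (simp add: sum_nonneg_eq_0_iff)
  then show "q = r"
    using mult_ln_div_eq_diff_iff[OF r_pos q_nonneg] by (simp add: vec_eq_iff)
qed (auto simp: bregE_def intro!: sum.neutral)

definition gibbs :: "real \<Rightarrow> real^'n::finite \<Rightarrow> real^'n \<Rightarrow> real^'n" where
  "gibbs \<eta> y q = (\<chi> i. q $ i * exp (- \<eta> * y $ i) / (\<Sum>j\<in>UNIV. q $ j * exp (- \<eta> * y $ j)))"

lemma gibbs_in_simplex_interior:
  assumes "\<forall>i. 0 < q $ i"
  shows "gibbs \<eta> y q \<in> simplex_interior"
proof -
  have "0 < (\<Sum>j\<in>UNIV. q $ j * exp (- \<eta> * y $ j))"
    using assms by (intro sum_pos) auto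
  with assms show ?thesis
    by (simp add: gibbs_def simplex_interior_def prob_simplex_def less_imp_le
        sum_divide_distrib[symmetric])
qed

lemma entropic_prox_objective_eq:
  assumes "\<forall>i. 0 < r $ i" and "q \<in> prob_simplex"
  shows "\<eta> * inner y q + bregE q r
    = bregE q (gibbs \<eta> y r) - ln (\<Sum>j\<in>UNIV. r $ j * exp (- \<eta> * y $ j))"
proof -
  define Z where "Z = (\<Sum>j\<in>UNIV. r $ j * exp (- \<eta> * y $ j))"
  have "0 < Z"
    using assms(1) unfolding Z_def by (intro sum_pos) auto
  have gibbs_nth: "gibbs \<eta> y r $ i = r $ i * exp (- \<eta> * y $ i) / Z" for i
    unfolding gibbs_def Z_def by simp
  have "\<eta> * (y $ i * q $ i) + q $ i * ln (q $ i / r $ i)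
      = q $ i * ln (q $ i / gibbs \<eta> y r $ i) - q $ i * ln Z" for i
  proof (cases "q $ i = 0")
    case False
    with assms have "0 < q $ i" and "0 < r $ i"
      by (auto simp: prob_simplex_def order_le_less)
    with \<open>0 < Z\<close> show ?thesis
      by (simp add: gibbs_nth ln_div ln_mult algebra_simps)
  qed simp
  then have "\<eta> * inner y q + bregE q r = (\<Sum>i\<in>UNIV. q $ i * ln (q $ i / gibbs \<eta> y r $ i)) - (\<Sum>i\<in>UNIV. q $ i) * ln Z"
    by (simp add: inner_vec_def bregE_def sum_distrib_left sum_distrib_right sum_subtractf
        flip: sum.distrib)
  with assms(2) show ?thesis
    by (simp add: bregE_def prob_simplex_def Z_def)
qed

lemma is_arg_min_entropic_prox_eq_gibbs:
  assumes "\<forall>i. 0 < r $ i"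
    and "is_arg_min (\<lambda>q. \<eta> * inner y q + bregE q r) (\<lambda>q. q \<in> prob_simplex) a"
  shows "a = gibbs \<eta> y r"
proof -
  define g where "g = gibbs \<eta> y r"
  have g: "g \<in> simplex_interior"
    unfolding g_def using assms(1) by (rule gibbs_in_simplex_interior)
  have "is_arg_min (\<lambda>q. bregE q g) (\<lambda>q. q \<in> prob_simplex) a"
    using is_arg_min_pos_affine[OF assms(2), where k = 1] entropic_prox_objective_eq[OF assms(1)]
    by (simp add: g_def)
  with g have "a \<in> prob_simplex" and "bregE a g \<le> bregE g g"
    by (auto simp: is_arg_min_linorder simplex_interior_def)
  moreover have "bregE g g = 0"
    using g bregE_eq_0_iff[of g g] by (simp add: simplex_interior_def)
  ultimately show ?thesis
    using g bregE_nonneg[of a g] bregE_eq_0_iff[of a g] by (simp add: g_def)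
qed

lemma negent_bregman_eq_bregE:
  assumes "q \<in> prob_simplex" and "r \<in> simplex_interior"
  shows "negent q - negent r - inner (q - r) (\<chi> i. ln (r $ i) + 1) = bregE q r"
proof -
  have "q $ i * ln (q $ i) - r $ i * ln (r $ i) - (q $ i - r $ i) * (ln (r $ i) + 1)
      = q $ i * ln (q $ i / r $ i) - (q $ i - r $ i)" for i
  proof (cases "q $ i = 0")
    case False
    with assms have "0 < q $ i" and "0 < r $ i"
      by (auto simp: simplex_interior_def prob_simplex_def order_le_less)
    then show ?thesis
      by (simp add: ln_div algebra_simps)
  qed (simp add: algebra_simps)
  with assms show ?thesis
    by (simp add: negent_def inner_vec_def bregE_eq_sum_excess simplex_interior_def
        flip: sum_subtractf)
qed

lemma half_sq_norm_bregman:
  fixes x v :: "'a::real_inner"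
  shows "1/2 * (norm x)\<^sup>2 - 1/2 * (norm v)\<^sup>2 - inner (x - v) v = 1/2 * (norm (x - v))\<^sup>2"
  unfolding power2_norm_eq_inner by (simp add: inner_diff_left inner_diff_right inner_commute)

lemma DR_eq_separable:
  assumes "q \<in> prob_simplex" and "r \<in> simplex_interior"
  shows "DR aw ap (x, q) (v, r) = aw * (1/2 * (norm (x - v))\<^sup>2) + ap * bregE q r"
proof -
  have "DR aw ap (x, q) (v, r)
      = aw * (1/2 * (norm x)\<^sup>2 - 1/2 * (norm v)\<^sup>2 - inner (x - v) v)
        + ap * (negent q - negent r - inner (q - r) (\<chi> i. ln (r $ i) + 1))"
    by (simp add: DR_def Rreg_def gradR_def algebra_simps)
  then show ?thesis
    by (simp only: half_sq_norm_bregman negent_bregman_eq_bregE[OF assms])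
qed

lemma is_prox_eq_Pair:
  fixes v g a :: "real^'d::finite" and r h b :: "real^'n::finite"
  assumes "r \<in> simplex_interior" and "0 < aw" and "0 < ap"
    and "\<gamma> = aw * kw" and "\<gamma> = ap * kp"
    and "is_prox aw ap (v, r) (\<gamma> *\<^sub>R (g, h)) z"
    and "is_arg_min (\<lambda>x. kw * inner g x + 1/2 * (norm (x - v))\<^sup>2) (\<lambda>x. x \<in> cball 0 1) a"
    and "is_arg_min (\<lambda>q. kp * inner h q + bregE q r) (\<lambda>q. q \<in> prob_simplex) b"
  shows "z = (a, b)"
proof -
  obtain a' b' where z: "z = (a', b')"
    by fastforce
  have "is_arg_min (\<lambda>u. inner u (\<gamma> *\<^sub>R (g, h)) + DR aw ap u (v, r))
      (\<lambda>u. u \<in> cball 0 1 \<times> prob_simplex) (a', b')"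
    using assms(6) by (simp add: is_prox_def Zset_def z)
  then have w_part: "is_arg_min (\<lambda>x. inner x (\<gamma> *\<^sub>R g) + aw * (1/2 * (norm (x - v))\<^sup>2))
        (\<lambda>x. x \<in> cball 0 1) a'"
    and p_part: "is_arg_min (\<lambda>q. inner q (\<gamma> *\<^sub>R h) + ap * bregE q r)
        (\<lambda>q. q \<in> prob_simplex) b'"
    by (rule is_arg_min_separable; simp add: DR_eq_separable assms(1))+
  have "is_arg_min (\<lambda>x. inner (kw *\<^sub>R g) x + 1/2 * (norm (x - v))\<^sup>2) (\<lambda>x. x \<in> cball 0 1) a'"
    by (rule is_arg_min_pos_affine[OF w_part, where k = aw and C = 0])
      (simp_all add: assms(2,4) inner_commute algebra_simps)
  moreover have "is_arg_min (\<lambda>x. inner (kw *\<^sub>R g) x + 1/2 * (norm (x - v))\<^sup>2) (\<lambda>x. x \<in> cball 0 1) a"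
    using assms(7) by simp
  ultimately have "a' = a"
    by (rule is_arg_min_prox_quadratic_unique[OF convex_cball])
  have "is_arg_min (\<lambda>q. kp * inner h q + bregE q r) (\<lambda>q. q \<in> prob_simplex) b'"
    by (rule is_arg_min_pos_affine[OF p_part, where k = ap and C = 0])
      (simp_all add: assms(3,5) inner_commute algebra_simps)
  moreover have "\<forall>i. 0 < r $ i"
    using assms(1) by (simp add: simplex_interior_def)
  ultimately have "b' = b"
    using assms(8) is_arg_min_entropic_prox_eq_gibbs by metis
  with \<open>a' = a\<close> show ?thesis
    by (simp add: z)
qed

lemma mpfp_eq_optimistic_mirror_descent:
  fixes A :: "real^'d::finite^'n::finite"
    and u v :: "nat \<Rightarrow> (real^'d) \<times> (real^'n)"
    and w wh :: "nat \<Rightarrow> real^'d" and p ph :: "nat \<Rightarrow> real^'n"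
  assumes "0 < aw" and "0 < ap" and "\<gamma> = aw * kw" and "\<gamma> = ap * kp"
    and "v 1 = (wh 0, ph 0)" and "ph 0 \<in> simplex_interior"
    and mpfp_u: "\<forall>t\<in>{1..T}. is_prox aw ap (v t) (\<gamma> *\<^sub>R Fop A (v t)) (u t)"
    and mpfp_v: "\<forall>t\<in>{1..T}. is_prox aw ap (v t) (\<gamma> *\<^sub>R Fop A (u t)) (v (Suc t))"
    and omd_w: "\<forall>t\<in>{1..T}. is_arg_min
        (\<lambda>x. kw * inner (- (transpose A *v ph (t - 1))) x + 1/2 * (norm (x - wh (t - 1)))\<^sup>2)
        (\<lambda>x. x \<in> cball 0 1) (w t)"
    and omd_p: "\<forall>t\<in>{1..T}. is_arg_min
        (\<lambda>q. kp * inner (A *v wh (t - 1)) q + bregE q (ph (t - 1)))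
        (\<lambda>q. q \<in> prob_simplex) (p t)"
    and omd_wh: "\<forall>t\<in>{1..T}. is_arg_min
        (\<lambda>x. kw * inner (- (transpose A *v p t)) x + 1/2 * (norm (x - wh (t - 1)))\<^sup>2)
        (\<lambda>x. x \<in> cball 0 1) (wh t)"
    and omd_ph: "\<forall>t\<in>{1..T}. is_arg_min
        (\<lambda>q. kp * inner (A *v w t) q + bregE q (ph (t - 1)))
        (\<lambda>q. q \<in> prob_simplex) (ph t)"
  shows "\<forall>t\<in>{1..T}. u t = (w t, p t) \<and> v (Suc t) = (wh t, ph t)"
proof -
  note prox_step = is_prox_eq_Pair[OF _ assms(1-4)]
  have step: "u t = (w t, p t) \<and> v (Suc t) = (wh t, ph t) \<and> ph t \<in> simplex_interior"
    if t: "t \<in> {1..T}" and vt: "v t = (wh (t - 1), ph (t - 1))"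
      and interior: "ph (t - 1) \<in> simplex_interior" for t
  proof -
    have ut: "u t = (w t, p t)"
      using prox_step[OF interior _ omd_w[rule_format, OF t] omd_p[rule_format, OF t]]
        mpfp_u[rule_format, OF t] by (simp add: vt Fop_def)
    moreover have "v (Suc t) = (wh t, ph t)"
      using prox_step[OF interior _ omd_wh[rule_format, OF t] omd_ph[rule_format, OF t]]
        mpfp_v[rule_format, OF t] by (simp add: vt ut Fop_def)
    moreover have "ph t \<in> simplex_interior"
    proof -
      have "\<forall>i. 0 < ph (t - 1) $ i"
        using interior by (simp add: simplex_interior_def)
      then show ?thesis
        using is_arg_min_entropic_prox_eq_gibbs[OF _ omd_ph[rule_format, OF t]]
          gibbs_in_simplex_interior by simp
    qed
    ultimately show ?thesis
      by blast
  qed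
  have invariant: "v (Suc t) = (wh t, ph t) \<and> ph t \<in> simplex_interior" if "t \<le> T" for t
    using that
  proof (induction t)
    case 0
    then show ?case
      using assms(5,6) by simp
  next
    case (Suc t)
    then show ?case
      using step[of "Suc t"] by simp
  qed
  show ?thesis
  proof
    fix t
    assume t: "t \<in> {1..T}"
    then have "v t = (wh (t - 1), ph (t - 1)) \<and> ph (t - 1) \<in> simplex_interior"
      using invariant[of "t - 1"] by auto
    with t show "u t = (w t, p t) \<and> v (Suc t) = (wh t, ph t)"
      using step by blast
  qed
qed

lemma average_const_weights:
  fixes f :: "nat \<Rightarrow> 'a::real_vector" and \<gamma> :: real
  assumes "\<gamma> \<noteq> 0"
  shows "(1 / (\<Sum>s=1..t. \<gamma>)) *\<^sub>R (\<Sum>s=1..t. \<gamma> *\<^sub>R f s) = (1 / real t) *\<^sub>R (\<Sum>s=1..t. f s)"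
  using assms by (simp add: scaleR_sum_right[symmetric])

theorem theorem8:
  fixes A :: "real^'d::finite^'n::finite"
    and T :: nat
    and u v :: "nat \<Rightarrow> (real^'d) \<times> (real^'n)"
    and w wh :: "nat \<Rightarrow> real^'d"
    and p ph :: "nat \<Rightarrow> real^'n"
    and c aw ap \<gamma> :: real
  assumes n2: "CARD('n) \<ge> 2"
  defines "c \<equiv> sqrt (ln (real CARD('n))) + 1 / sqrt 2"
  defines "aw \<equiv> sqrt (ln (real CARD('n))) / c"
  defines "ap \<equiv> 1 / (sqrt (ln (real CARD('n))) * c)"
  defines "\<gamma> \<equiv> 1 / c"
  assumes v1: "v 1 = (0, \<chi> i. 1 / real CARD('n))"
    and mpfp_u: "\<forall>t\<in>{1..T}. is_prox aw ap (v t) (\<gamma> *\<^sub>R Fop A (v t)) (u t)"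
    and mpfp_v: "\<forall>t\<in>{1..T}. is_prox aw ap (v t) (\<gamma> *\<^sub>R Fop A (u t)) (v (Suc t))"
    and wh0: "wh 0 = 0"
    and ph0: "ph 0 = (\<chi> i. 1 / real CARD('n))"
    and omd_w: "\<forall>t\<in>{1..T}. is_arg_min
        (\<lambda>x. 1 / sqrt (ln (real CARD('n))) * inner (- (transpose A *v ph (t - 1))) x
              + 1/2 * (norm (x - wh (t - 1)))^2)
        (\<lambda>x. x \<in> cball 0 1) (w t)"
    and omd_p: "\<forall>t\<in>{1..T}. is_arg_min
        (\<lambda>q. sqrt (ln (real CARD('n))) * inner (A *v wh (t - 1)) q + bregE q (ph (t - 1)))
        (\<lambda>q. q \<in> prob_simplex) (p t)"
    and omd_wh: "\<forall>t\<in>{1..T}. is_arg_min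
        (\<lambda>x. 1 / sqrt (ln (real CARD('n))) * inner (- (transpose A *v p t)) x
              + 1/2 * (norm (x - wh (t - 1)))^2)
        (\<lambda>x. x \<in> cball 0 1) (wh t)"
    and omd_ph: "\<forall>t\<in>{1..T}. is_arg_min
        (\<lambda>q. sqrt (ln (real CARD('n))) * inner (A *v w t) q + bregE q (ph (t - 1)))
        (\<lambda>q. q \<in> prob_simplex) (ph t)"
  shows "\<forall>t\<in>{1..T}.
           u t = (w t, p t)
         \<and> v (Suc t) = (wh t, ph t)
         \<and> (1 / (\<Sum>s=1..t. \<gamma>)) *\<^sub>R (\<Sum>s=1..t. \<gamma> *\<^sub>R u s)
             = ((1 / real t) *\<^sub>R (\<Sum>s=1..t. w s), (1 / real t) *\<^sub>R (\<Sum>s=1..t. p s))"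
proof -
  let ?s = "sqrt (ln (real CARD('n)))"
  have "0 < ?s"
    using n2 by simp
  then have "0 < c"
    by (simp add: c_def add_pos_pos)
  have "0 < aw" and "0 < ap" and "\<gamma> = aw * (1 / ?s)" and "\<gamma> = ap * ?s"
    using \<open>0 < ?s\<close> \<open>0 < c\<close> by (simp_all add: aw_def ap_def \<gamma>_def)
  moreover have "v 1 = (wh 0, ph 0)"
    using v1 wh0 ph0 by simp
  moreover have "ph 0 \<in> simplex_interior"
    by (simp add: ph0 simplex_interior_def prob_simplex_def)
  ultimately have iterates: "\<forall>t\<in>{1..T}. u t = (w t, p t) \<and> v (Suc t) = (wh t, ph t)"
    by (rule mpfp_eq_optimistic_mirror_descent[OF _ _ _ _ _ _ mpfp_u mpfp_v omd_w omd_p omd_wh omd_ph])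
  have "\<gamma> \<noteq> 0"
    using \<open>0 < c\<close> by (simp add: \<gamma>_def)
  have "(\<Sum>s=1..t. u s) = (\<Sum>s=1..t. w s, \<Sum>s=1..t. p s)" if "t \<in> {1..T}" for t
    using iterates that by (auto simp: sum_prod[symmetric] intro!: sum.cong)
  with iterates show ?thesis
    unfolding average_const_weights[OF \<open>\<gamma> \<noteq> 0\<close>] by simp
qed

end
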